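(* Let $j\in\mathbb N_0$ and let $s_0,\dots,s_{2j+2}$ be Hermitian $q\times q$ matrices such that $(s_{l+k})_{l,k=0}^{j}$ and $(s_{l+k+1})_{l,k=0}^{j}$ are positive definite. Take $a=0$. Then for all sufficiently large $b>0$ the matrices $K_{1,j}$ and $H_{2,j}$ (formed with $a=0$ and this $b$) are positive definite, so that $\mathbf m_j(0,b)$ and $\mathbf l_j(0,b)$ are defined, and $$\mathbf M_j(0)=\lim_{b\to+\infty} b\,\mathbf m_j(0,b),\qquad \mathbf L_j(0)=\lim_{b\to+\infty} b^{-1}\,\mathbf l_j(0,b).$$
   Context: All matrices are complex, $q\in\mathbb N$, $I_q$, $0_q$ are the $q\times q$ identity and zero matrices. For real $a<b$ set $\widehat s_i:=-ab\,s_i+(a+b)s_{i+1}-s_{i+2}$, $H_{1,i}:=(s_{l+k})_{l,k=0}^i$, $H_{2,i}:=(\widehat s_{l+k})_{l,k=0}^{i}$, $K_{1,i}:=(bs_{l+k}-s_{l+k+1})_{l,k=0}^{i}$, $K_{2,i}:=(-as_{l+k}+s_{l+k+1})_{l,k=0}^i$. Let $T_0:=0_q$ and, for $i\ge1$, let $T_i$ be the $(i+1)\times(i+1)$ block matrix with $I_q$ in block positions $(l+1,l)$ and $0_q$ elsewhere; $R_i(z):=(I-zT_i)^{-1}$; $v_i:=\mathrm{col}(I_q,0_q,\dots,0_q)\in\mathbb C^{(i+1)q\times q}$. Let $u_{2,0}:=-(a+b)s_0+s_1$, $u_{2,i}:=\mathrm{col}(u_{2,0},-\widehat s_0,\dots,-\widehat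 s_{i-1})$, $\widetilde u_{2,i}:=\mathrm{col}(-s_0,as_0-s_1,\dots,as_{i-1}-s_i)$. New DSM parameters (depending on $a,b$): $\lambda_i:=(u_{2,i}+av_is_0)^*R_i(a)^*H_{2,i}^{-1}R_i(a)(u_{2,i}+av_is_0)$, $\mu_i:=v_i^*R_i(a)^*K_{1,i}^{-1}R_i(a)v_i$; $\mathbf l_0(a,b):=\lambda_0$, $\mathbf l_i(a,b):=\lambda_i-\lambda_{i-1}$ ($i\ge1$); $\mathbf m_0(a,b):=\mu_0$, $\mathbf m_i(a,b):=\mu_i-\mu_{i-1}$ ($i\ge1$). Earlier DSM parameters (depending only on $a$): $\mathbf M_0(a):=s_0^{-1}$, $\mathbf M_i(a):=v_i^*R_i(a)^*H_{1,i}^{-1}R_i(a)v_i-v_{i-1}^*R_{i-1}(a)^*H_{1,i-1}^{-1}R_{i-1}(a)v_{i-1}$ ($i\ge1$); $\mathbf L_0(a):=\widetilde u_{2,0}^*K_{2,0}^{-1}\widetilde u_{2,0}$, $\mathbf L_i(a):=\widetilde u_{2,i}^*R_i(a)^*K_{2,i}^{-1}R_i(a)\widetilde u_{2,i}-\widetilde u_{2,i-1}^*R_{i-1}(a)^*K_{2,i-1}^{-1}R_{i-1}(a)\widetilde u_{2,i-1}$ ($i\ge1$). At $a=0$, $\mathbf M_j(0)$ and $\mathbf L_j(0)$ are the Dyukarev–Stieltjes parameters of the truncated Stieltjes matrix moment problem. *)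

theory Defs
  imports "Jordan_Normal_Form.Gauss_Jordan_Elimination"
begin

definition cadj :: "complex mat \<Rightarrow> complex mat" where
  "cadj A = mat (dim_col A) (dim_row A) (\<lambda>(i,j). cnj (A $$ (j,i)))"

definition hermitian_mat :: "nat \<Rightarrow> complex mat \<Rightarrow> bool" where
  "hermitian_mat n A \<longleftrightarrow> A \<in> carrier_mat n n \<and> cadj A = A"

definition pos_def_mat :: "nat \<Rightarrow> complex mat \<Rightarrow> bool" where
  "pos_def_mat n A \<longleftrightarrow> hermitian_mat n A \<and>
     (\<forall>v \<in> carrier_vec n. v \<noteq> 0\<^sub>v n \<longrightarrow>
        0 < Re (\<Sum>i<n. cnj (v $ i) * (A *\<^sub>v v) $ i))"

definition minv :: "complex mat \<Rightarrow> complex mat" where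
  "minv A = (case mat_inverse A of Some B \<Rightarrow> B | None \<Rightarrow> 0\<^sub>m (dim_col A) (dim_row A))"

text \<open>Block Hankel matrix (t (l+k))_{l,k=0}^i of size (i+1)q.\<close>
definition hankel :: "nat \<Rightarrow> nat \<Rightarrow> (nat \<Rightarrow> complex mat) \<Rightarrow> complex mat" where
  "hankel q i t = mat ((i+1)*q) ((i+1)*q)
     (\<lambda>(r,c). t (r div q + c div q) $$ (r mod q, c mod q))"

text \<open>Block column col(f 0, ..., f i) of size (i+1)q x q.\<close>
definition blockcol :: "nat \<Rightarrow> nat \<Rightarrow> (nat \<Rightarrow> complex mat) \<Rightarrow> complex mat" where
  "blockcol q i f = mat ((i+1)*q) q (\<lambda>(r,c). f (r div q) $$ (r mod q, c))"

text \<open>T_i: I_q in block positions (l+1,l), zero elsewhere (T_0 = 0_q).\<close>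
definition Tmat :: "nat \<Rightarrow> nat \<Rightarrow> complex mat" where
  "Tmat q i = mat ((i+1)*q) ((i+1)*q)
     (\<lambda>(r,c). if r div q = c div q + 1 \<and> r mod q = c mod q then 1 else 0)"

definition Rmat :: "nat \<Rightarrow> nat \<Rightarrow> complex \<Rightarrow> complex mat" where
  "Rmat q i z = minv (1\<^sub>m ((i+1)*q) - z \<cdot>\<^sub>m Tmat q i)"

definition vvec :: "nat \<Rightarrow> nat \<Rightarrow> complex mat" where
  "vvec q i = blockcol q i (\<lambda>k. if k = 0 then 1\<^sub>m q else 0\<^sub>m q q)"

definition shat :: "real \<Rightarrow> real \<Rightarrow> (nat \<Rightarrow> complex mat) \<Rightarrow> nat \<Rightarrow> complex mat" where
  "shat a b s i = (- complex_of_real (a*b)) \<cdot>\<^sub>m s i + complex_of_real (a+b) \<cdot>\<^sub>m s (i+1) - s (i+2)"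

definition H1 :: "nat \<Rightarrow> (nat \<Rightarrow> complex mat) \<Rightarrow> nat \<Rightarrow> complex mat" where
  "H1 q s i = hankel q i s"

definition H2 :: "nat \<Rightarrow> real \<Rightarrow> real \<Rightarrow> (nat \<Rightarrow> complex mat) \<Rightarrow> nat \<Rightarrow> complex mat" where
  "H2 q a b s i = hankel q i (shat a b s)"

definition K1 :: "nat \<Rightarrow> real \<Rightarrow> (nat \<Rightarrow> complex mat) \<Rightarrow> nat \<Rightarrow> complex mat" where
  "K1 q b s i = hankel q i (\<lambda>n. complex_of_real b \<cdot>\<^sub>m s n - s (n+1))"

definition K2 :: "nat \<Rightarrow> real \<Rightarrow> (nat \<Rightarrow> complex mat) \<Rightarrow> nat \<Rightarrow> complex mat" where
  "K2 q a s i = hankel q i (\<lambda>n. (- complex_of_real a) \<cdot>\<^sub>m s n + s (n+1))"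

definition u20 :: "real \<Rightarrow> real \<Rightarrow> (nat \<Rightarrow> complex mat) \<Rightarrow> complex mat" where
  "u20 a b s = (- complex_of_real (a+b)) \<cdot>\<^sub>m s 0 + s 1"

definition u2 :: "nat \<Rightarrow> real \<Rightarrow> real \<Rightarrow> (nat \<Rightarrow> complex mat) \<Rightarrow> nat \<Rightarrow> complex mat" where
  "u2 q a b s i = blockcol q i (\<lambda>k. if k = 0 then u20 a b s else - shat a b s (k - 1))"

definition u2t :: "nat \<Rightarrow> real \<Rightarrow> (nat \<Rightarrow> complex mat) \<Rightarrow> nat \<Rightarrow> complex mat" where
  "u2t q a s i = blockcol q i
     (\<lambda>k. if k = 0 then - s 0 else complex_of_real a \<cdot>\<^sub>m s (k - 1) - s k)"

definition lam :: "nat \<Rightarrow> real \<Rightarrow> real \<Rightarrow> (nat \<Rightarrow> complex mat) \<Rightarrow> nat \<Rightarrow> complex mat" where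
  "lam q a b s i = (let w = Rmat q i (complex_of_real a) *
        (u2 q a b s i + complex_of_real a \<cdot>\<^sub>m (vvec q i * s 0))
     in cadj w * minv (H2 q a b s i) * w)"

definition mu :: "nat \<Rightarrow> real \<Rightarrow> real \<Rightarrow> (nat \<Rightarrow> complex mat) \<Rightarrow> nat \<Rightarrow> complex mat" where
  "mu q a b s i = (let w = Rmat q i (complex_of_real a) * vvec q i
     in cadj w * minv (K1 q b s i) * w)"

definition l_par :: "nat \<Rightarrow> real \<Rightarrow> real \<Rightarrow> (nat \<Rightarrow> complex mat) \<Rightarrow> nat \<Rightarrow> complex mat" where
  "l_par q a b s i = (if i = 0 then lam q a b s 0 else lam q a b s i - lam q a b s (i - 1))"

definition m_par :: "nat \<Rightarrow> real \<Rightarrow> real \<Rightarrow> (nat \<Rightarrow> complex mat) \<Rightarrow> nat \<Rightarrow> complex mat" where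
  "m_par q a b s i = (if i = 0 then mu q a b s 0 else mu q a b s i - mu q a b s (i - 1))"

definition Mcum :: "nat \<Rightarrow> real \<Rightarrow> (nat \<Rightarrow> complex mat) \<Rightarrow> nat \<Rightarrow> complex mat" where
  "Mcum q a s i = (let w = Rmat q i (complex_of_real a) * vvec q i
     in cadj w * minv (H1 q s i) * w)"

definition Lcum :: "nat \<Rightarrow> real \<Rightarrow> (nat \<Rightarrow> complex mat) \<Rightarrow> nat \<Rightarrow> complex mat" where
  "Lcum q a s i = (let w = Rmat q i (complex_of_real a) * u2t q a s i
     in cadj w * minv (K2 q a s i) * w)"

definition M_par :: "nat \<Rightarrow> real \<Rightarrow> (nat \<Rightarrow> complex mat) \<Rightarrow> nat \<Rightarrow> complex mat" where
  "M_par q a s i = (if i = 0 then minv (s 0) else Mcum q a s i - Mcum q a s (i - 1))"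

definition L_par :: "nat \<Rightarrow> real \<Rightarrow> (nat \<Rightarrow> complex mat) \<Rightarrow> nat \<Rightarrow> complex mat" where
  "L_par q a s i = (if i = 0 then cadj (u2t q a s 0) * minv (K2 q a s 0) * u2t q a s 0
                    else Lcum q a s i - Lcum q a s (i - 1))"

definition mat_tendsto_at_top :: "nat \<Rightarrow> (real \<Rightarrow> complex mat) \<Rightarrow> complex mat \<Rightarrow> bool" where
  "mat_tendsto_at_top q f L \<longleftrightarrow>
     (\<forall>i<q. \<forall>k<q. ((\<lambda>b. f b $$ (i,k)) \<longlongrightarrow> L $$ (i,k)) at_top)"

end

(* At a = 0 the resolvent R(0) is the identity and everything is an affine pencil in b:
   K1 = b H - H', H2 = b H' - H'' and u2 = b U - X, where H, H', H'' are the block Hankel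
   matrices of s_k, s_(k+1), s_(k+2), U = col(-s_0, ..., -s_i) is u2~ at a = 0 and
   H' = K2 at a = 0. Pulling the factor b out of the pencils gives
     b mu_i = v^* (H - H'/b)^-1 v   and   lambda_i / b = W_b^* (H' - H''/b)^-1 W_b,  W_b = U - X/b,
   and since inversion is continuous at the invertible limits H and H', these tend to the
   cumulative quantities whose first differences are M_j(0) and L_j(0). Positive definiteness
   of b P - Q for large b follows from coercivity of the positive definite P. *)

theory Submission imports Defs "Jordan_Normal_Form.Determinant" begin

definition mat_tendsto :: "'b filter \<Rightarrow> nat \<Rightarrow> nat \<Rightarrow> ('b \<Rightarrow> complex mat) \<Rightarrow> complex mat \<Rightarrow> bool"
  where "mat_tendsto F nr nc f A \<longleftrightarrow> (\<forall>i<nr. \<forall>k<nc. ((\<lambda>x. f x $$ (i,k)) \<longlongrightarrow> A $$ (i,k)) F)"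

lemma mat_tendstoI:
  "(\<And>i k. i < nr \<Longrightarrow> k < nc \<Longrightarrow> ((\<lambda>x. f x $$ (i,k)) \<longlongrightarrow> A $$ (i,k)) F) \<Longrightarrow> mat_tendsto F nr nc f A"
  unfolding mat_tendsto_def by blast

lemma mat_tendstoD:
  "mat_tendsto F nr nc f A \<Longrightarrow> i < nr \<Longrightarrow> k < nc \<Longrightarrow> ((\<lambda>x. f x $$ (i,k)) \<longlongrightarrow> A $$ (i,k)) F"
  unfolding mat_tendsto_def by blast

lemma mat_tendsto_const: "mat_tendsto F nr nc (\<lambda>x. A) A"
  unfolding mat_tendsto_def by auto

lemma mat_tendsto_cong:
  assumes "eventually (\<lambda>x. f x = g x) F" and "mat_tendsto F nr nc g A"
  shows "mat_tendsto F nr nc f A"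
proof (rule mat_tendstoI)
  fix i k assume "i < nr" "k < nc"
  moreover have "eventually (\<lambda>x. g x $$ (i,k) = f x $$ (i,k)) F"
    using assms(1) by (auto elim: eventually_mono)
  ultimately show "((\<lambda>x. f x $$ (i,k)) \<longlongrightarrow> A $$ (i,k)) F"
    using assms(2) by (auto dest: mat_tendstoD intro: Lim_transform_eventually)
qed

lemma mat_tendsto_diff:
  assumes "\<And>x. f x \<in> carrier_mat nr nc" "\<And>x. g x \<in> carrier_mat nr nc"
    and "A \<in> carrier_mat nr nc" "B \<in> carrier_mat nr nc"
    and "mat_tendsto F nr nc f A" "mat_tendsto F nr nc g B"
  shows "mat_tendsto F nr nc (\<lambda>x. f x - g x) (A - B)"
proof (rule mat_tendstoI)
  fix i k assume ik: "i < nr" "k < nc"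
  have "((\<lambda>x. f x $$ (i,k) - g x $$ (i,k)) \<longlongrightarrow> A $$ (i,k) - B $$ (i,k)) F"
    using assms(5,6) ik by (intro tendsto_diff) (auto dest: mat_tendstoD)
  moreover have "(f x - g x) $$ (i,k) = f x $$ (i,k) - g x $$ (i,k)" for x
    using assms(1,2) ik by (metis carrier_matD index_minus_mat(1))
  ultimately show "((\<lambda>x. (f x - g x) $$ (i,k)) \<longlongrightarrow> (A - B) $$ (i,k)) F"
    using assms(3,4) ik by simp
qed

lemma mat_tendsto_smult:
  assumes "\<And>x. f x \<in> carrier_mat nr nc" "A \<in> carrier_mat nr nc"
    and "mat_tendsto F nr nc f A" "(c \<longlongrightarrow> c0) F"
  shows "mat_tendsto F nr nc (\<lambda>x. c x \<cdot>\<^sub>m f x) (c0 \<cdot>\<^sub>m A)"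
proof (rule mat_tendstoI)
  fix i k assume ik: "i < nr" "k < nc"
  have "((\<lambda>x. c x * f x $$ (i,k)) \<longlongrightarrow> c0 * A $$ (i,k)) F"
    using assms(3,4) ik by (intro tendsto_mult) (auto dest: mat_tendstoD)
  moreover have "(c x \<cdot>\<^sub>m f x) $$ (i,k) = c x * f x $$ (i,k)" for x
    using assms(1) ik by (metis carrier_matD index_smult_mat(1))
  ultimately show "((\<lambda>x. (c x \<cdot>\<^sub>m f x) $$ (i,k)) \<longlongrightarrow> (c0 \<cdot>\<^sub>m A) $$ (i,k)) F"
    using assms(2) ik by simp
qed

lemma index_mult_mat_sum:
  assumes "A \<in> carrier_mat nr m" "B \<in> carrier_mat m nc" "i < nr" "k < nc"
  shows "(A * B) $$ (i,k) = (\<Sum>l<m. A $$ (i,l) * B $$ (l,k))"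
  using assms by (auto simp: scalar_prod_def atLeast0LessThan intro!: sum.cong)

lemma mat_tendsto_mult:
  assumes "\<And>x. f x \<in> carrier_mat nr m" "\<And>x. g x \<in> carrier_mat m nc"
    and "A \<in> carrier_mat nr m" "B \<in> carrier_mat m nc"
    and "mat_tendsto F nr m f A" "mat_tendsto F m nc g B"
  shows "mat_tendsto F nr nc (\<lambda>x. f x * g x) (A * B)"
proof (rule mat_tendstoI)
  fix i k assume ik: "i < nr" "k < nc"
  have "((\<lambda>x. \<Sum>l<m. f x $$ (i,l) * g x $$ (l,k)) \<longlongrightarrow> (\<Sum>l<m. A $$ (i,l) * B $$ (l,k))) F"
    using assms(5,6) ik by (intro tendsto_sum tendsto_mult) (auto dest: mat_tendstoD)
  then show "((\<lambda>x. (f x * g x) $$ (i,k)) \<longlongrightarrow> (A * B) $$ (i,k)) F"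
    using index_mult_mat_sum[OF assms(1,2) ik] index_mult_mat_sum[OF assms(3,4) ik] by simp
qed

lemma cadj_carrier [simp]: "A \<in> carrier_mat nr nc \<Longrightarrow> cadj A \<in> carrier_mat nc nr"
  unfolding cadj_def by auto

lemma index_cadj: "A \<in> carrier_mat nr nc \<Longrightarrow> i < nc \<Longrightarrow> k < nr \<Longrightarrow> cadj A $$ (i,k) = cnj (A $$ (k,i))"
  unfolding cadj_def by auto

lemma mat_tendsto_cadj:
  assumes "\<And>x. f x \<in> carrier_mat nr nc" "A \<in> carrier_mat nr nc" "mat_tendsto F nr nc f A"
  shows "mat_tendsto F nc nr (\<lambda>x. cadj (f x)) (cadj A)"
proof (rule mat_tendstoI)
  fix i k assume ik: "i < nc" "k < nr"
  have "((\<lambda>x. cnj (f x $$ (k,i))) \<longlongrightarrow> cnj (A $$ (k,i))) F"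
    using assms(3) ik by (intro tendsto_cnj) (auto dest: mat_tendstoD)
  then show "((\<lambda>x. cadj (f x) $$ (i,k)) \<longlongrightarrow> cadj A $$ (i,k)) F"
    using index_cadj[OF assms(1) ik] index_cadj[OF assms(2) ik] by simp
qed

lemma tendsto_det:
  assumes "\<And>x. f x \<in> carrier_mat n n" "A \<in> carrier_mat n n" "mat_tendsto F n n f A"
  shows "((\<lambda>x. det (f x)) \<longlongrightarrow> det A) F"
proof -
  have "((\<lambda>x. \<Sum>p \<in> {p. p permutes {0..<n}}. signof p * (\<Prod>i = 0..<n. f x $$ (i, p i)))
      \<longlongrightarrow> (\<Sum>p \<in> {p. p permutes {0..<n}}. signof p * (\<Prod>i = 0..<n. A $$ (i, p i)))) F"
    using assms(3) unfolding mat_tendsto_def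
    by (intro tendsto_sum tendsto_mult tendsto_const tendsto_prod) (auto simp: permutes_in_image)
  then show ?thesis using det_def'[OF assms(1)] det_def'[OF assms(2)] by simp
qed

lemma mat_tendsto_mat_delete:
  assumes "\<And>x. f x \<in> carrier_mat n n" "A \<in> carrier_mat n n" "mat_tendsto F n n f A"
  shows "mat_tendsto F (n-1) (n-1) (\<lambda>x. mat_delete (f x) i k) (mat_delete A i k)"
proof (rule mat_tendstoI)
  fix r c assume "r < n-1" "c < n-1"
  moreover have "dim_row (f x) = n" "dim_col (f x) = n" for x using assms(1)[of x] by auto
  ultimately show "((\<lambda>x. mat_delete (f x) i k $$ (r,c)) \<longlongrightarrow> mat_delete A i k $$ (r,c)) F"
    using assms(2,3) unfolding mat_delete_def mat_tendsto_def by (auto split: if_splits)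
qed

lemma mat_tendsto_adj_mat:
  assumes f: "\<And>x. f x \<in> carrier_mat n n" and A: "A \<in> carrier_mat n n"
    and lim: "mat_tendsto F n n f A"
  shows "mat_tendsto F n n (\<lambda>x. adj_mat (f x)) (adj_mat A)"
proof (rule mat_tendstoI)
  fix i k assume ik: "i < n" "k < n"
  have "mat_delete (f x) k i \<in> carrier_mat (n-1) (n-1)" for x
    using mat_delete_carrier[OF f] by blast
  then have "((\<lambda>x. (-1)^(k+i) * det (mat_delete (f x) k i)) \<longlongrightarrow> (-1)^(k+i) * det (mat_delete A k i)) F"
    using mat_delete_carrier[OF A] mat_tendsto_mat_delete[OF f A lim]
    by (intro tendsto_mult tendsto_const tendsto_det) blast+
  then show "((\<lambda>x. adj_mat (f x) $$ (i,k)) \<longlongrightarrow> adj_mat A $$ (i,k)) F"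
    using f[THEN carrier_matD(1)] f[THEN carrier_matD(2)] A ik
    unfolding adj_mat_def cofactor_def by simp
qed

lemma minv_carrier [simp]: "A \<in> carrier_mat n n \<Longrightarrow> minv A \<in> carrier_mat n n"
  unfolding minv_def by (cases "mat_inverse A") (auto dest: mat_inverse(2))

lemma minv_singular:
  assumes A: "A \<in> carrier_mat n n" and "det A = 0"
  shows "minv A = 0\<^sub>m n n"
proof (cases "mat_inverse A")
  case (Some B)
  then have "det A * det B = 1"
    using mat_inverse(2)[OF A Some] det_mult[OF A, of B] by auto
  with \<open>det A = 0\<close> show ?thesis by simp
qed (use A in \<open>auto simp: minv_def\<close>)

lemma minv_inverse:
  assumes A: "A \<in> carrier_mat n n" and "det A \<noteq> 0"
  shows "A * minv A = 1\<^sub>m n" "minv A * A = 1\<^sub>m n"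
proof -
  obtain B where "mat_inverse A = Some B"
  proof (cases "mat_inverse A")
    case None
    then have "A \<notin> Units (ring_mat TYPE(complex) n (undefined::unit))" by (rule mat_inverse(1)[OF A])
    moreover have "A \<in> Units (ring_mat TYPE(complex) n (undefined::unit))"
      by (rule det_non_zero_imp_unit[OF A \<open>det A \<noteq> 0\<close>])
    ultimately show ?thesis by blast
  qed
  then show "A * minv A = 1\<^sub>m n" "minv A * A = 1\<^sub>m n"
    using mat_inverse(2)[OF A] unfolding minv_def by auto
qed

lemma minv_eqI:
  assumes A: "A \<in> carrier_mat n n" and B: "B \<in> carrier_mat n n" and AB: "A * B = 1\<^sub>m n"
  shows "minv A = B"
proof -
  have "det A * det B = 1" using det_mult[OF A B] AB by simp
  then have "det A \<noteq> 0" by auto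
  have "minv A = minv A * (A * B)" using AB minv_carrier[OF A] by simp
  also have "\<dots> = (minv A * A) * B" using A B by (simp add: assoc_mult_mat[of _ n n _ n _ n])
  also have "\<dots> = B" using minv_inverse(2)[OF A \<open>det A \<noteq> 0\<close>] B by simp
  finally show ?thesis .
qed

lemma minv_one [simp]: "minv (1\<^sub>m n) = 1\<^sub>m n"
  by (rule minv_eqI) auto

lemma minv_adj_mat:
  assumes A: "A \<in> carrier_mat n n" and d: "det A \<noteq> 0"
  shows "minv A = inverse (det A) \<cdot>\<^sub>m adj_mat A"
proof (rule minv_eqI[OF A])
  show "inverse (det A) \<cdot>\<^sub>m adj_mat A \<in> carrier_mat n n" using adj_mat(1)[OF A] by simp
  have "A * (inverse (det A) \<cdot>\<^sub>m adj_mat A) = inverse (det A) \<cdot>\<^sub>m (A * adj_mat A)"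
    using mult_smult_distrib[OF A adj_mat(1)[OF A]] .
  also have "\<dots> = 1\<^sub>m n" unfolding adj_mat(2)[OF A] using d by (auto intro!: eq_matI)
  finally show "A * (inverse (det A) \<cdot>\<^sub>m adj_mat A) = 1\<^sub>m n" .
qed

lemma minv_smult:
  assumes A: "A \<in> carrier_mat n n" and c: "c \<noteq> 0"
  shows "minv (c \<cdot>\<^sub>m A) = inverse c \<cdot>\<^sub>m minv A"
proof (cases "det A = 0")
  case True
  then have "det (c \<cdot>\<^sub>m A) = 0" by simp
  then show ?thesis using True A by (auto simp: minv_singular intro!: eq_matI)
next
  case False
  show ?thesis
  proof (rule minv_eqI)
    have M: "minv A \<in> carrier_mat n n" using A by simp
    have "(c \<cdot>\<^sub>m A) * (inverse c \<cdot>\<^sub>m minv A) = c \<cdot>\<^sub>m (A * (inverse c \<cdot>\<^sub>m minv A))"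
      by (rule mult_smult_assoc_mat[OF A smult_carrier_mat[OF M]])
    also have "\<dots> = c \<cdot>\<^sub>m (inverse c \<cdot>\<^sub>m (A * minv A))"
      using mult_smult_distrib[OF A M] by simp
    also have "\<dots> = 1\<^sub>m n" using minv_inverse(1)[OF A False] c by (auto intro!: eq_matI)
    finally show "(c \<cdot>\<^sub>m A) * (inverse c \<cdot>\<^sub>m minv A) = 1\<^sub>m n" .
  qed (use A in auto)
qed

lemma mat_tendsto_minv:
  assumes f: "\<And>x. f x \<in> carrier_mat n n" and A: "A \<in> carrier_mat n n"
    and lim: "mat_tendsto F n n f A" and d: "det A \<noteq> 0"
  shows "mat_tendsto F n n (\<lambda>x. minv (f x)) (minv A)"
proof -
  have det_lim: "((\<lambda>x. det (f x)) \<longlongrightarrow> det A) F" by (rule tendsto_det[OF f A lim])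
  have "mat_tendsto F n n (\<lambda>x. inverse (det (f x)) \<cdot>\<^sub>m adj_mat (f x)) (inverse (det A) \<cdot>\<^sub>m adj_mat A)"
    by (rule mat_tendsto_smult[OF adj_mat(1)[OF f] adj_mat(1)[OF A] mat_tendsto_adj_mat[OF f A lim]])
      (intro tendsto_inverse det_lim d)
  moreover have "eventually (\<lambda>x. minv (f x) = inverse (det (f x)) \<cdot>\<^sub>m adj_mat (f x)) F"
    using tendsto_imp_eventually_ne[OF det_lim d] by eventually_elim (rule minv_adj_mat[OF f])
  ultimately show ?thesis unfolding minv_adj_mat[OF A d] by (rule mat_tendsto_cong[rotated])
qed

lemma sandwich_carrier:
  "W \<in> carrier_mat n k \<Longrightarrow> G \<in> carrier_mat n n \<Longrightarrow> cadj W * minv G * W \<in> carrier_mat k k"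
  by (metis cadj_carrier minv_carrier mult_carrier_mat)

lemma mat_tendsto_sandwich_minv:
  assumes "\<And>x. W x \<in> carrier_mat n k" "W0 \<in> carrier_mat n k"
    and "\<And>x. G x \<in> carrier_mat n n" "G0 \<in> carrier_mat n n"
    and "mat_tendsto F n k W W0" "mat_tendsto F n n G G0" "det G0 \<noteq> 0"
  shows "mat_tendsto F k k (\<lambda>x. cadj (W x) * minv (G x) * W x) (cadj W0 * minv G0 * W0)"
proof -
  have left: "mat_tendsto F k n (\<lambda>x. cadj (W x) * minv (G x)) (cadj W0 * minv G0)"
    by (rule mat_tendsto_mult[OF _ _ _ _ mat_tendsto_cadj[OF assms(1,2,5)] mat_tendsto_minv[OF assms(3,4,6,7)]])
      (use assms in auto)
  show ?thesis
    by (rule mat_tendsto_mult[OF _ _ _ _ left assms(5)]) (use assms in \<open>auto intro!: mult_carrier_mat[of _ k n]\<close>)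
qed

section \<open>Inverses of the pencil \<open>b A - B\<close> as \<open>b \<rightarrow> \<infinity>\<close>\<close>

lemma cadj_smult: "cadj (c \<cdot>\<^sub>m A) = cnj c \<cdot>\<^sub>m cadj A"
  unfolding cadj_def by (rule eq_matI) auto

lemma smult_diff_factor:
  fixes A B :: "complex mat"
  assumes "A \<in> carrier_mat n m" "B \<in> carrier_mat n m" "c \<noteq> 0"
  shows "c \<cdot>\<^sub>m A - B = c \<cdot>\<^sub>m (A - inverse c \<cdot>\<^sub>m B)"
  using assms by (auto intro!: eq_matI simp: algebra_simps)

lemma smult_mult_smult:
  fixes X Y :: "'a :: comm_ring mat"
  assumes "X \<in> carrier_mat n m" "Y \<in> carrier_mat m k"
  shows "(a \<cdot>\<^sub>m X) * (c \<cdot>\<^sub>m Y) = (a * c) \<cdot>\<^sub>m (X * Y)"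
proof -
  have "(a \<cdot>\<^sub>m X) * (c \<cdot>\<^sub>m Y) = a \<cdot>\<^sub>m (X * (c \<cdot>\<^sub>m Y))"
    by (rule mult_smult_assoc_mat[OF assms(1) smult_carrier_mat[OF assms(2)]])
  also have "X * (c \<cdot>\<^sub>m Y) = c \<cdot>\<^sub>m (X * Y)" by (rule mult_smult_distrib[OF assms])
  finally show ?thesis by (auto intro!: eq_matI simp: mult.assoc)
qed

lemma sandwich_smult:
  assumes W: "W \<in> carrier_mat n k" and G: "G \<in> carrier_mat n n" and "d \<noteq> 0"
  shows "cadj (c \<cdot>\<^sub>m W) * minv (d \<cdot>\<^sub>m G) * (c \<cdot>\<^sub>m W) = (cnj c * inverse d * c) \<cdot>\<^sub>m (cadj W * minv G * W)"
proof -
  have "cadj (c \<cdot>\<^sub>m W) * minv (d \<cdot>\<^sub>m G) = (cnj c * inverse d) \<cdot>\<^sub>m (cadj W * minv G)"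
    unfolding cadj_smult minv_smult[OF G \<open>d \<noteq> 0\<close>]
    by (rule smult_mult_smult[OF cadj_carrier[OF W] minv_carrier[OF G]])
  moreover have "cadj W * minv G \<in> carrier_mat k n"
    by (rule mult_carrier_mat[OF cadj_carrier[OF W] minv_carrier[OF G]])
  ultimately show ?thesis using smult_mult_smult[OF _ W] by simp
qed

lemma mat_tendsto_diff_inverse_smult:
  assumes "A \<in> carrier_mat n m" "B \<in> carrier_mat n m"
  shows "mat_tendsto at_top n m (\<lambda>b. A - inverse (complex_of_real b) \<cdot>\<^sub>m B) A"
proof -
  have "((\<lambda>b. complex_of_real (inverse b)) \<longlongrightarrow> complex_of_real 0) at_top"
    by (intro tendsto_of_real tendsto_inverse_0_at_top filterlim_ident)
  then have "((\<lambda>b. inverse (complex_of_real b)) \<longlongrightarrow> 0) at_top" by simp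
  then have "mat_tendsto at_top n m (\<lambda>b. A - inverse (complex_of_real b) \<cdot>\<^sub>m B) (A - 0 \<cdot>\<^sub>m B)"
    using assms by (intro mat_tendsto_diff mat_tendsto_const mat_tendsto_smult) auto
  moreover have "A - 0 \<cdot>\<^sub>m B = A" using assms by (auto intro!: eq_matI)
  ultimately show ?thesis by simp
qed

lemma mat_tendsto_smult_sandwich_minv_pencil:
  assumes A: "A \<in> carrier_mat n n" and B: "B \<in> carrier_mat n n" and V: "V \<in> carrier_mat n k"
    and "det A \<noteq> 0"
  shows "mat_tendsto at_top k k
           (\<lambda>b. complex_of_real b \<cdot>\<^sub>m (cadj V * minv (complex_of_real b \<cdot>\<^sub>m A - B) * V))
           (cadj V * minv A * V)"
proof -
  define G where "G b = A - inverse (complex_of_real b) \<cdot>\<^sub>m B" for b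
  have G: "G b \<in> carrier_mat n n" for b unfolding G_def using B by (simp add: minus_carrier_mat)
  have "\<forall>\<^sub>F b in at_top. complex_of_real b \<cdot>\<^sub>m (cadj V * minv (complex_of_real b \<cdot>\<^sub>m A - B) * V)
      = cadj V * minv (G b) * V"
    using eventually_gt_at_top[of 0]
  proof eventually_elim
    case (elim b)
    then have b: "complex_of_real b \<noteq> 0" by simp
    have "V = 1 \<cdot>\<^sub>m V" by (auto intro!: eq_matI)
    then have "cadj V * minv (complex_of_real b \<cdot>\<^sub>m A - B) * V
        = inverse (complex_of_real b) \<cdot>\<^sub>m (cadj V * minv (G b) * V)"
      using sandwich_smult[OF V G b, of 1]
      unfolding G_def smult_diff_factor[OF A B b] by simp
    then show ?case using b by (auto intro!: eq_matI)
  qed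
  moreover have "mat_tendsto at_top k k (\<lambda>b. cadj V * minv (G b) * V) (cadj V * minv A * V)"
    using assms G unfolding G_def
    by (intro mat_tendsto_sandwich_minv mat_tendsto_const mat_tendsto_diff_inverse_smult) auto
  ultimately show ?thesis by (rule mat_tendsto_cong)
qed

lemma mat_tendsto_sandwich_minv_pencil:
  assumes A: "A \<in> carrier_mat n n" and B: "B \<in> carrier_mat n n"
    and U: "U \<in> carrier_mat n k" and X: "X \<in> carrier_mat n k" and "det A \<noteq> 0"
  shows "mat_tendsto at_top k k
           (\<lambda>b. complex_of_real (inverse b) \<cdot>\<^sub>m (cadj (complex_of_real b \<cdot>\<^sub>m U - X)
                  * minv (complex_of_real b \<cdot>\<^sub>m A - B) * (complex_of_real b \<cdot>\<^sub>m U - X)))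
           (cadj U * minv A * U)"
proof -
  define G where "G b = A - inverse (complex_of_real b) \<cdot>\<^sub>m B" for b
  define W where "W b = U - inverse (complex_of_real b) \<cdot>\<^sub>m X" for b
  have G: "G b \<in> carrier_mat n n" and W: "W b \<in> carrier_mat n k" for b
    unfolding G_def W_def using B X by (auto simp: minus_carrier_mat)
  have "\<forall>\<^sub>F b in at_top. complex_of_real (inverse b) \<cdot>\<^sub>m (cadj (complex_of_real b \<cdot>\<^sub>m U - X)
      * minv (complex_of_real b \<cdot>\<^sub>m A - B) * (complex_of_real b \<cdot>\<^sub>m U - X))
      = cadj (W b) * minv (G b) * W b"
    using eventually_gt_at_top[of 0]
  proof eventually_elim
    case (elim b)
    then have b: "complex_of_real b \<noteq> 0" by simp
    have "complex_of_real b \<cdot>\<^sub>m A - B = complex_of_real b \<cdot>\<^sub>m G b"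
      and "complex_of_real b \<cdot>\<^sub>m U - X = complex_of_real b \<cdot>\<^sub>m W b"
      unfolding G_def W_def by (rule smult_diff_factor[OF A B b], rule smult_diff_factor[OF U X b])
    then show ?case
      using sandwich_smult[OF W G b, of "complex_of_real b"] b by (auto intro!: eq_matI)
  qed
  moreover have "mat_tendsto at_top k k (\<lambda>b. cadj (W b) * minv (G b) * W b) (cadj U * minv A * U)"
    using assms G W unfolding G_def W_def
    by (intro mat_tendsto_sandwich_minv mat_tendsto_diff_inverse_smult) auto
  ultimately show ?thesis by (rule mat_tendsto_cong)
qed

section \<open>Hermitian and positive definite matrices\<close>

definition sesq :: "nat \<Rightarrow> complex mat \<Rightarrow> (nat \<Rightarrow> complex) \<Rightarrow> (nat \<Rightarrow> complex) \<Rightarrow> complex"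
  where "sesq n P x y = (\<Sum>i<n. \<Sum>l<n. cnj (x i) * P $$ (i,l) * y l)"

lemma sesq_diff_left: "sesq n P (\<lambda>i. x i - y i) z = sesq n P x z - sesq n P y z"
  unfolding sesq_def by (simp add: sum_subtractf algebra_simps)

lemma sesq_diff_right: "sesq n P z (\<lambda>i. x i - y i) = sesq n P z x - sesq n P z y"
  unfolding sesq_def by (simp add: sum_subtractf algebra_simps)

lemma sesq_scale_left: "sesq n P (\<lambda>i. c * x i) z = cnj c * sesq n P x z"
  unfolding sesq_def by (simp add: sum_distrib_left algebra_simps)

lemma sesq_scale_right: "sesq n P z (\<lambda>i. c * x i) = c * sesq n P z x"
  unfolding sesq_def by (simp add: sum_distrib_left algebra_simps)

lemma sesq_smult_diff_mat:
  assumes "P \<in> carrier_mat n n" "Q \<in> carrier_mat n n"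
  shows "sesq n (c \<cdot>\<^sub>m P - Q) x y = c * sesq n P x y - sesq n Q x y"
proof -
  have "sesq n (c \<cdot>\<^sub>m P - Q) x y
      = (\<Sum>i<n. \<Sum>l<n. c * (cnj (x i) * P $$ (i,l) * y l) - cnj (x i) * Q $$ (i,l) * y l)"
    unfolding sesq_def using assms by (intro sum.cong refl) (simp add: algebra_simps)
  also have "\<dots> = c * sesq n P x y - sesq n Q x y"
    unfolding sesq_def by (simp add: sum_subtractf sum_distrib_left)
  finally show ?thesis .
qed

lemma hermitian_mat_index:
  "hermitian_mat n P \<Longrightarrow> i < n \<Longrightarrow> k < n \<Longrightarrow> P $$ (i,k) = cnj (P $$ (k,i))"
  unfolding hermitian_mat_def by (metis index_cadj)

lemma hermitian_matI:
  assumes "P \<in> carrier_mat n n" "\<And>i k. i < n \<Longrightarrow> k < n \<Longrightarrow> P $$ (i,k) = cnj (P $$ (k,i))"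
  shows "hermitian_mat n P"
  unfolding hermitian_mat_def
proof
  show "cadj P = P"
  proof (rule eq_matI)
    fix i k assume "i < dim_row P" "k < dim_col P"
    then have "i < n" "k < n" using assms(1) by auto
    then show "cadj P $$ (i,k) = P $$ (i,k)"
      using index_cadj[OF assms(1)] assms(2)[of k i] by simp
  qed (use assms(1) in \<open>auto simp: cadj_def\<close>)
qed (fact assms(1))

lemma sesq_hermitian_swap:
  assumes "hermitian_mat n P"
  shows "sesq n P x y = cnj (sesq n P y x)"
proof -
  have "sesq n P x y = (\<Sum>i<n. \<Sum>l<n. cnj (x i) * cnj (P $$ (l,i)) * y l)"
    unfolding sesq_def by (intro sum.cong refl) (subst hermitian_mat_index[OF assms], auto)
  also have "\<dots> = (\<Sum>l<n. \<Sum>i<n. cnj (x i) * cnj (P $$ (l,i)) * y l)"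
    by (rule sum.swap)
  also have "\<dots> = cnj (sesq n P y x)"
    unfolding sesq_def cnj_sum by (intro sum.cong refl) (simp add: ac_simps)
  finally show ?thesis .
qed

lemma sesq_real:
  assumes "hermitian_mat n P"
  shows "sesq n P x x = of_real (Re (sesq n P x x))"
  using sesq_hermitian_swap[OF assms, of x x] by (metis Reals_cnj_iff complex_is_Real_iff of_real_Re)

lemma sesq_vec:
  assumes P: "P \<in> carrier_mat n n" and v: "v \<in> carrier_vec n"
  shows "(\<Sum>i<n. cnj (v $ i) * (P *\<^sub>v v) $ i) = sesq n P (\<lambda>i. v $ i) (\<lambda>i. v $ i)"
proof -
  have "(P *\<^sub>v v) $ i = (\<Sum>l<n. P $$ (i,l) * v $ l)" if "i < n" for i
    using P v that by (simp add: scalar_prod_def atLeast0LessThan)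
  then show ?thesis
    unfolding sesq_def by (intro sum.cong refl) (simp add: sum_distrib_left mult.assoc)
qed

lemma pos_def_mat_sesq_pos:
  assumes "pos_def_mat n P" "i < n" "x i \<noteq> 0"
  shows "0 < Re (sesq n P x x)"
proof -
  have P: "P \<in> carrier_mat n n"
    using assms(1) unfolding pos_def_mat_def hermitian_mat_def by auto
  have "vec n x \<noteq> 0\<^sub>v n" using assms(2,3) by (metis index_vec index_zero_vec(1))
  then have "0 < Re (\<Sum>i<n. cnj (vec n x $ i) * (P *\<^sub>v vec n x) $ i)"
    using assms(1) unfolding pos_def_mat_def by auto
  also have "(\<Sum>i<n. cnj (vec n x $ i) * (P *\<^sub>v vec n x) $ i) = sesq n P x x"
    unfolding sesq_vec[OF P vec_carrier] unfolding sesq_def by (intro sum.cong refl) simp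
  finally show ?thesis .
qed

lemma pos_def_mat_sesq_nonneg:
  assumes "pos_def_mat n P"
  shows "0 \<le> Re (sesq n P x x)"
proof (cases "\<exists>i<n. x i \<noteq> 0")
  case True
  then show ?thesis using pos_def_mat_sesq_pos[OF assms] by (meson less_le)
qed (simp add: sesq_def)

lemma pos_def_mat_cauchy_schwarz:
  assumes pd: "pos_def_mat n P" and y: "0 < Re (sesq n P y y)"
  shows "(cmod (sesq n P y x))^2 \<le> Re (sesq n P x x) * Re (sesq n P y y)"
proof -
  have H: "hermitian_mat n P" using pd unfolding pos_def_mat_def by auto
  define h where "h = sesq n P y y"
  have h: "h = of_real (Re h)" unfolding h_def by (rule sesq_real[OF H])
  have h0: "h \<noteq> 0" using y unfolding h_def by auto
  define t where "t = sesq n P y x / h"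
  define z where "z = (\<lambda>i. x i - t * y i)"
  have yz: "sesq n P y z = 0"
    unfolding z_def sesq_diff_right sesq_scale_right t_def h_def using h0 h_def by simp
  have "sesq n P z z = sesq n P x z"
    using yz unfolding z_def sesq_diff_left sesq_scale_left by simp
  also have "\<dots> = sesq n P x x - t * cnj (sesq n P y x)"
    unfolding z_def sesq_diff_right sesq_scale_right sesq_hermitian_swap[OF H, of x y] ..
  also have "t * cnj (sesq n P y x) = of_real ((cmod (sesq n P y x))^2) / h"
    unfolding t_def using complex_norm_square[of "sesq n P y x"] by simp
  finally have "Re (sesq n P z z) = Re (sesq n P x x) - (cmod (sesq n P y x))^2 / Re h"
    by (subst (asm) h) (simp add: Re_divide_of_real)
  moreover have "0 \<le> Re (sesq n P z z)" by (rule pos_def_mat_sesq_nonneg[OF pd])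
  ultimately show ?thesis using y unfolding h_def by (simp add: divide_le_eq)
qed

lemma pos_def_mat_det_nonzero:
  assumes pd: "pos_def_mat n P"
  shows "det P \<noteq> 0"
proof
  assume "det P = 0"
  have P: "P \<in> carrier_mat n n" using pd unfolding pos_def_mat_def hermitian_mat_def by auto
  obtain v where v: "v \<in> carrier_vec n" "v \<noteq> 0\<^sub>v n" "P *\<^sub>v v = 0\<^sub>v n"
    using det_0_iff_vec_prod_zero[OF P] \<open>det P = 0\<close> by auto
  then have "0 < Re (\<Sum>i<n. cnj (v $ i) * (P *\<^sub>v v) $ i)"
    using pd unfolding pos_def_mat_def by auto
  with v(3) show False by simp
qed

text \<open>Coercivity: with \<open>Y = P\<^sup>-\<^sup>1\<close> and \<open>y\<^sub>k\<close> its \<open>k\<close>-th column, \<open>sesq n P y\<^sub>k x = x k\<close>, so the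
  Cauchy--Schwarz inequality bounds each \<open>\<bar>x k\<bar>\<^sup>2\<close> by a multiple of \<open>sesq n P x x\<close>.\<close>

lemma pos_def_mat_coercive:
  assumes pd: "pos_def_mat n P"
  shows "\<exists>c>0. \<forall>x. c * (\<Sum>k<n. (cmod (x k))^2) \<le> Re (sesq n P x x)"
proof -
  have H: "hermitian_mat n P" using pd unfolding pos_def_mat_def by auto
  have P: "P \<in> carrier_mat n n" using H unfolding hermitian_mat_def by auto
  define Y where "Y = minv P"
  have Y: "Y \<in> carrier_mat n n" unfolding Y_def using P by simp
  have PY: "(\<Sum>l<n. P $$ (i,l) * Y $$ (l,k)) = (if i = k then 1 else 0)" if "i < n" "k < n" for i k
    using index_mult_mat_sum[OF P Y that] minv_inverse(1)[OF P pos_def_mat_det_nonzero[OF pd]] that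
    unfolding Y_def by simp
  define y where "y k = (\<lambda>i. Y $$ (i,k))" for k
  have sesq_col: "sesq n P (y k) x = x k" if k: "k < n" for x k
  proof -
    have "sesq n P x (y k) = (\<Sum>i<n. cnj (x i) * (\<Sum>l<n. P $$ (i,l) * Y $$ (l,k)))"
      unfolding sesq_def y_def by (simp add: sum_distrib_left mult.assoc)
    also have "\<dots> = (\<Sum>i<n. if i = k then cnj (x i) else 0)"
      by (intro sum.cong) (auto simp: PY k)
    also have "\<dots> = cnj (x k)" using k by simp
    finally show ?thesis using sesq_hermitian_swap[OF H, of "y k" x] by simp
  qed
  have col_pos: "0 < Re (sesq n P (y k) (y k))" if k: "k < n" for k
  proof -
    have "\<exists>i<n. y k i \<noteq> 0"
    proof (rule ccontr)
      assume "\<not> ?thesis"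
      then have "(\<Sum>l<n. P $$ (k,l) * Y $$ (l,k)) = 0" unfolding y_def by simp
      with PY[OF k k] show False by simp
    qed
    then show ?thesis using pos_def_mat_sesq_pos[OF pd] by blast
  qed
  define D where "D = (\<Sum>k<n. Re (sesq n P (y k) (y k)))"
  have "0 \<le> D" unfolding D_def using col_pos by (intro sum_nonneg) (simp add: less_imp_le)
  have bound: "(\<Sum>k<n. (cmod (x k))^2) \<le> Re (sesq n P x x) * D" for x
  proof -
    have "(\<Sum>k<n. (cmod (x k))^2) \<le> (\<Sum>k<n. Re (sesq n P x x) * Re (sesq n P (y k) (y k)))"
      using pos_def_mat_cauchy_schwarz[OF pd col_pos] sesq_col by (intro sum_mono) auto
    then show ?thesis unfolding D_def by (simp add: sum_distrib_left)
  qed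
  show ?thesis
  proof (intro exI[of _ "1 / (D + 1)"] conjI allI)
    show "0 < 1 / (D + 1)" using \<open>0 \<le> D\<close> by simp
    fix x
    have "(\<Sum>k<n. (cmod (x k))^2) \<le> Re (sesq n P x x) * (D + 1)"
      using bound[of x] pos_def_mat_sesq_nonneg[OF pd, of x] by (simp add: algebra_simps)
    then show "1 / (D + 1) * (\<Sum>k<n. (cmod (x k))^2) \<le> Re (sesq n P x x)"
      using \<open>0 \<le> D\<close> by (simp add: field_simps)
  qed
qed

lemma sesq_bounded: "\<exists>C. \<forall>x. Re (sesq n Q x x) \<le> C * (\<Sum>k<n. (cmod (x k))^2)"
proof (intro exI allI)
  fix x
  define N where "N = (\<Sum>k<n. (cmod (x k))^2)"
  have sq_le: "(cmod (x i))^2 \<le> N" if "i < n" for i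
    unfolding N_def using that by (intro member_le_sum) auto
  have prod_le: "cmod (x i) * cmod (x l) \<le> N" if "i < n" "l < n" for i l
  proof -
    have "2 * (cmod (x i) * cmod (x l)) \<le> (cmod (x i))^2 + (cmod (x l))^2"
      using sum_squares_bound[of "cmod (x i)" "cmod (x l)"] by (simp add: power2_eq_square)
    then show ?thesis using sq_le[OF that(1)] sq_le[OF that(2)] by simp
  qed
  have "Re (sesq n Q x x) \<le> cmod (sesq n Q x x)" by (rule complex_Re_le_cmod)
  also have "\<dots> \<le> (\<Sum>i<n. \<Sum>l<n. cmod (cnj (x i) * Q $$ (i,l) * x l))"
    unfolding sesq_def by (rule order.trans[OF norm_sum sum_mono]) (rule norm_sum)
  also have "\<dots> \<le> (\<Sum>i<n. \<Sum>l<n. cmod (Q $$ (i,l)) * N)"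
  proof (intro sum_mono)
    fix i l assume "i \<in> {..<n}" "l \<in> {..<n}"
    then have "cmod (Q $$ (i,l)) * (cmod (x i) * cmod (x l)) \<le> cmod (Q $$ (i,l)) * N"
      using prod_le by (intro mult_left_mono) auto
    then show "cmod (cnj (x i) * Q $$ (i,l) * x l) \<le> cmod (Q $$ (i,l)) * N"
      by (simp add: norm_mult algebra_simps)
  qed
  finally show "Re (sesq n Q x x) \<le> (\<Sum>i<n. \<Sum>l<n. cmod (Q $$ (i,l))) * (\<Sum>k<n. (cmod (x k))^2)"
    unfolding N_def by (simp add: sum_distrib_right)
qed

lemma hermitian_mat_scaled_diff:
  assumes "hermitian_mat n P" "hermitian_mat n Q"
  shows "hermitian_mat n (complex_of_real b \<cdot>\<^sub>m P - Q)"
proof (rule hermitian_matI)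
  have P: "P \<in> carrier_mat n n" and Q: "Q \<in> carrier_mat n n"
    using assms unfolding hermitian_mat_def by auto
  show "complex_of_real b \<cdot>\<^sub>m P - Q \<in> carrier_mat n n" by (rule minus_carrier_mat[OF Q])
  fix i k assume "i < n" "k < n"
  with P Q show "(complex_of_real b \<cdot>\<^sub>m P - Q) $$ (i,k) = cnj ((complex_of_real b \<cdot>\<^sub>m P - Q) $$ (k,i))"
    using hermitian_mat_index[OF assms(1), of i k] hermitian_mat_index[OF assms(2), of i k] by simp
qed

lemma eventually_pos_def_scaled_diff:
  assumes pd: "pos_def_mat n P" and Q: "hermitian_mat n Q"
  shows "\<forall>\<^sub>F b in at_top. pos_def_mat n (complex_of_real b \<cdot>\<^sub>m P - Q)"
proof -
  have H: "hermitian_mat n P" using pd unfolding pos_def_mat_def by auto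
  have PQ: "P \<in> carrier_mat n n" "Q \<in> carrier_mat n n"
    using H Q unfolding hermitian_mat_def by auto
  obtain c where c: "c > 0" "\<And>x. c * (\<Sum>k<n. (cmod (x k))^2) \<le> Re (sesq n P x x)"
    using pos_def_mat_coercive[OF pd] by blast
  obtain C where C: "\<And>x. Re (sesq n Q x x) \<le> C * (\<Sum>k<n. (cmod (x k))^2)"
    using sesq_bounded by blast
  show ?thesis
    using eventually_ge_at_top[of "max 0 (C / c + 1)"]
  proof eventually_elim
    case (elim b)
    have pos: "0 < Re (sesq n (complex_of_real b \<cdot>\<^sub>m P - Q) x x)" if i: "i < n" "x i \<noteq> 0" for x i
    proof -
      define N where "N = (\<Sum>k<n. (cmod (x k))^2)"
      have "0 < (cmod (x i))^2" using i by simp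
      also have "\<dots> \<le> N" unfolding N_def using i by (intro member_le_sum) auto
      finally have "0 < N" .
      have "C < b * c" using elim c(1) by (simp add: field_simps)
      then have "C * N < b * c * N" using \<open>0 < N\<close> by simp
      also have "\<dots> \<le> b * Re (sesq n P x x)"
        using mult_left_mono[OF c(2)[of x], of b] elim unfolding N_def by (simp add: mult.assoc)
      finally show ?thesis
        using C[of x] unfolding N_def sesq_smult_diff_mat[OF PQ] by simp
    qed
    show "pos_def_mat n (complex_of_real b \<cdot>\<^sub>m P - Q)"
      unfolding pos_def_mat_def
    proof (intro conjI ballI impI hermitian_mat_scaled_diff[OF H Q])
      fix v :: "complex vec" assume v: "v \<in> carrier_vec n" "v \<noteq> 0\<^sub>v n"
      then obtain i where "i < n" "v $ i \<noteq> 0" by (metis carrier_vecD eq_vecI index_zero_vec)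
      then show "0 < Re (\<Sum>i<n. cnj (v $ i) * ((complex_of_real b \<cdot>\<^sub>m P - Q) *\<^sub>v v) $ i)"
        using pos sesq_vec[OF minus_carrier_mat[OF PQ(2)] v(1)] by simp
    qed
  qed
qed

lemma pos_def_mat_leading_submatrix:
  assumes pd: "pos_def_mat n P" and "m \<le> n" and P': "P' \<in> carrier_mat m m"
    and same: "\<And>r c. r < m \<Longrightarrow> c < m \<Longrightarrow> P' $$ (r,c) = P $$ (r,c)"
  shows "pos_def_mat m P'"
  unfolding pos_def_mat_def
proof (intro conjI ballI impI)
  have H: "hermitian_mat n P" using pd unfolding pos_def_mat_def by auto
  show "hermitian_mat m P'"
  proof (rule hermitian_matI[OF P'])
    fix r c assume "r < m" "c < m"
    then show "P' $$ (r,c) = cnj (P' $$ (c,r))"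
      using hermitian_mat_index[OF H, of r c] \<open>m \<le> n\<close> by (simp add: same)
  qed
  fix v :: "complex vec" assume v: "v \<in> carrier_vec m" "v \<noteq> 0\<^sub>v m"
  then obtain i where i: "i < m" "v $ i \<noteq> 0" by (metis carrier_vecD eq_vecI index_zero_vec)
  define x where "x k = (if k < m then v $ k else 0)" for k
  have "0 < Re (sesq n P x x)"
    using pos_def_mat_sesq_pos[OF pd, of i x] i \<open>m \<le> n\<close> unfolding x_def by auto
  also have "sesq n P x x = (\<Sum>k<m. \<Sum>l<n. cnj (x k) * P $$ (k,l) * x l)"
    unfolding sesq_def by (rule sum.mono_neutral_right) (use \<open>m \<le> n\<close> in \<open>auto simp: x_def\<close>)
  also have "\<dots> = (\<Sum>k<m. \<Sum>l<m. cnj (x k) * P $$ (k,l) * x l)"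
    by (intro sum.cong refl sum.mono_neutral_right) (use \<open>m \<le> n\<close> in \<open>auto simp: x_def\<close>)
  also have "\<dots> = sesq m P' (\<lambda>i. v $ i) (\<lambda>i. v $ i)"
    unfolding sesq_def by (intro sum.cong refl) (simp add: x_def same)
  also have "\<dots> = (\<Sum>i<m. cnj (v $ i) * (P' *\<^sub>v v) $ i)"
    by (rule sesq_vec[OF P' v(1), symmetric])
  finally show "0 < Re (\<Sum>i<m. cnj (v $ i) * (P' *\<^sub>v v) $ i)" .
qed

lemma hankel_carrier [simp]: "hankel q i t \<in> carrier_mat ((i+1)*q) ((i+1)*q)"
  and dim_row_hankel [simp]: "dim_row (hankel q i t) = (i+1)*q"
  and dim_col_hankel [simp]: "dim_col (hankel q i t) = (i+1)*q"
  unfolding hankel_def by simp_all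

lemma blockcol_carrier [simp]: "blockcol q i f \<in> carrier_mat ((i+1)*q) q"
  and dim_row_blockcol [simp]: "dim_row (blockcol q i f) = (i+1)*q"
  and dim_col_blockcol [simp]: "dim_col (blockcol q i f) = q"
  unfolding blockcol_def by simp_all

lemma block_index_le: "(r::nat) < (i+1)*q \<Longrightarrow> r div q \<le> i"
  by (metis less_mult_imp_div_less less_Suc_eq_le mult.commute Suc_eq_plus1)

lemma block_offset_less: "(r::nat) < (i+1)*q \<Longrightarrow> r mod q < q"
  by (cases "q = 0") auto

lemma hankel_index:
  "r < (i+1)*q \<Longrightarrow> c < (i+1)*q \<Longrightarrow> hankel q i t $$ (r,c) = t (r div q + c div q) $$ (r mod q, c mod q)"
  unfolding hankel_def by simp

lemma blockcol_index:
  "r < (i+1)*q \<Longrightarrow> c < q \<Longrightarrow> blockcol q i f $$ (r,c) = f (r div q) $$ (r mod q, c)"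
  unfolding blockcol_def by simp

lemma hankel_cong:
  assumes "\<And>m. m \<le> 2*i \<Longrightarrow> t m = t' m"
  shows "hankel q i t = hankel q i t'"
proof (rule eq_matI)
  fix r c assume "r < dim_row (hankel q i t')" "c < dim_col (hankel q i t')"
  then have rc: "r < (i+1)*q" "c < (i+1)*q" by simp_all
  then have "r div q + c div q \<le> 2*i" using block_index_le[OF rc(1)] block_index_le[OF rc(2)] by simp
  with rc show "hankel q i t $$ (r,c) = hankel q i t' $$ (r,c)" by (simp add: hankel_index assms)
qed simp_all

lemma blockcol_cong:
  assumes "\<And>k. k \<le> i \<Longrightarrow> f k = g k"
  shows "blockcol q i f = blockcol q i g"
proof (rule eq_matI)
  fix r c assume "r < dim_row (blockcol q i g)" "c < dim_col (blockcol q i g)"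
  then have rc: "r < (i+1)*q" "c < q" by simp_all
  with block_index_le[OF rc(1)] show "blockcol q i f $$ (r,c) = blockcol q i g $$ (r,c)"
    by (simp add: blockcol_index assms)
qed simp_all

lemma hankel_smult_diff:
  assumes "\<And>m. m \<le> 2*i \<Longrightarrow> t m \<in> carrier_mat q q" "\<And>m. m \<le> 2*i \<Longrightarrow> t' m \<in> carrier_mat q q"
  shows "hankel q i (\<lambda>m. c \<cdot>\<^sub>m t m - t' m) = c \<cdot>\<^sub>m hankel q i t - hankel q i t'"
proof (rule eq_matI)
  fix r k assume "r < dim_row (c \<cdot>\<^sub>m hankel q i t - hankel q i t')" "k < dim_col (c \<cdot>\<^sub>m hankel q i t - hankel q i t')"
  then have rk: "r < (i+1)*q" "k < (i+1)*q" by auto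
  then have "r div q + k div q \<le> 2*i" using block_index_le[OF rk(1)] block_index_le[OF rk(2)] by simp
  with rk show "hankel q i (\<lambda>m. c \<cdot>\<^sub>m t m - t' m) $$ (r,k) = (c \<cdot>\<^sub>m hankel q i t - hankel q i t') $$ (r,k)"
    using assms[THEN carrier_matD(1)] assms[THEN carrier_matD(2)]
      block_offset_less[OF rk(1)] block_offset_less[OF rk(2)] by (simp add: hankel_index)
qed auto

lemma blockcol_smult_diff:
  assumes "\<And>k. k \<le> i \<Longrightarrow> f k \<in> carrier_mat q q" "\<And>k. k \<le> i \<Longrightarrow> g k \<in> carrier_mat q q"
  shows "blockcol q i (\<lambda>k. c \<cdot>\<^sub>m f k - g k) = c \<cdot>\<^sub>m blockcol q i f - blockcol q i g"
proof (rule eq_matI)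
  fix r k assume "r < dim_row (c \<cdot>\<^sub>m blockcol q i f - blockcol q i g)" "k < dim_col (c \<cdot>\<^sub>m blockcol q i f - blockcol q i g)"
  then have rk: "r < (i+1)*q" "k < q" by auto
  with block_index_le[OF rk(1)] block_offset_less[OF rk(1)]
  show "blockcol q i (\<lambda>k. c \<cdot>\<^sub>m f k - g k) $$ (r,k) = (c \<cdot>\<^sub>m blockcol q i f - blockcol q i g) $$ (r,k)"
    using assms[THEN carrier_matD(1)] assms[THEN carrier_matD(2)] by (simp add: blockcol_index)
qed auto

lemma hermitian_mat_hankel:
  assumes "\<And>m. m \<le> 2*i \<Longrightarrow> hermitian_mat q (t m)"
  shows "hermitian_mat ((i+1)*q) (hankel q i t)"
proof (rule hermitian_matI[OF hankel_carrier])
  fix r c assume rc: "r < (i+1)*q" "c < (i+1)*q"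
  then have "r div q + c div q \<le> 2*i" using block_index_le[OF rc(1)] block_index_le[OF rc(2)] by simp
  then show "hankel q i t $$ (r,c) = cnj (hankel q i t $$ (c,r))"
    using hermitian_mat_index[OF assms block_offset_less[OF rc(1)] block_offset_less[OF rc(2)]] rc
    by (simp add: hankel_index add.commute)
qed

lemma pos_def_mat_hankel_truncate:
  assumes "pos_def_mat ((j+1)*q) (hankel q j t)" "i \<le> j"
  shows "pos_def_mat ((i+1)*q) (hankel q i t)"
proof (rule pos_def_mat_leading_submatrix[OF assms(1) _ hankel_carrier])
  show "(i+1)*q \<le> (j+1)*q" using assms(2) by simp
  fix r c assume "r < (i+1)*q" "c < (i+1)*q"
  moreover from this have "r < (j+1)*q" "c < (j+1)*q"
    using \<open>(i+1)*q \<le> (j+1)*q\<close> by linarith+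
  ultimately show "hankel q i t $$ (r,c) = hankel q j t $$ (r,c)" by (simp add: hankel_index)
qed

section \<open>The parameters at \<open>a = 0\<close>\<close>

lemma Rmat_zero [simp]: "Rmat q i 0 = 1\<^sub>m ((i+1)*q)"
proof -
  have "1\<^sub>m ((i+1)*q) - 0 \<cdot>\<^sub>m Tmat q i = 1\<^sub>m ((i+1)*q)"
    by (rule eq_matI) (auto simp: Tmat_def)
  then show ?thesis unfolding Rmat_def by simp
qed

lemma vvec_carrier: "vvec q i \<in> carrier_mat ((i+1)*q) q"
  unfolding vvec_def by (rule blockcol_carrier)

lemma mu_zero: "mu q 0 b s i = cadj (vvec q i) * minv (K1 q b s i) * vvec q i"
  unfolding mu_def vvec_def Let_def by simp

lemma Mcum_zero: "Mcum q 0 s i = cadj (vvec q i) * minv (H1 q s i) * vvec q i"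
  unfolding Mcum_def vvec_def Let_def by simp

lemma lam_zero:
  assumes "s 0 \<in> carrier_mat q q"
  shows "lam q 0 b s i = cadj (u2 q 0 b s i) * minv (H2 q 0 b s i) * u2 q 0 b s i"
proof -
  have "u2 q 0 b s i + 0 \<cdot>\<^sub>m (vvec q i * s 0) = u2 q 0 b s i"
    using assms by (auto intro!: eq_matI simp: u2_def vvec_def)
  then show ?thesis unfolding lam_def Let_def u2_def by simp
qed

lemma Mcum_zero_base:
  assumes "s 0 \<in> carrier_mat q q"
  shows "Mcum q 0 s 0 = minv (s 0)"
proof -
  have "vvec q 0 = 1\<^sub>m q" by (rule eq_matI) (auto simp: vvec_def blockcol_def)
  moreover have "H1 q s 0 = s 0" using assms by (auto intro!: eq_matI simp: H1_def hankel_def)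
  moreover have "cadj (1\<^sub>m q) = 1\<^sub>m q" by (rule eq_matI) (auto simp: cadj_def)
  ultimately show ?thesis unfolding Mcum_zero using minv_carrier[OF assms] by simp
qed

lemma Lcum_zero: "Lcum q 0 s i = cadj (u2t q 0 s i) * minv (K2 q 0 s i) * u2t q 0 s i"
  unfolding Lcum_def u2t_def Let_def by simp

lemma K1_eq_pencil:
  assumes "\<And>m. m \<le> 2*i+1 \<Longrightarrow> s m \<in> carrier_mat q q"
  shows "K1 q b s i = complex_of_real b \<cdot>\<^sub>m hankel q i s - hankel q i (\<lambda>m. s (m+1))"
  unfolding K1_def by (rule hankel_smult_diff) (use assms in auto)

lemma H2_zero_eq_pencil:
  assumes "\<And>m. m \<le> 2*i+2 \<Longrightarrow> s m \<in> carrier_mat q q"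
  shows "H2 q 0 b s i = complex_of_real b \<cdot>\<^sub>m hankel q i (\<lambda>m. s (m+1)) - hankel q i (\<lambda>m. s (m+2))"
proof -
  have dim: "dim_row (s m) = q" "dim_col (s m) = q" if "m \<le> 2*i+2" for m
    using assms[OF that] by auto
  have "H2 q 0 b s i = hankel q i (\<lambda>m. complex_of_real b \<cdot>\<^sub>m s (m+1) - s (m+2))"
    unfolding H2_def shat_def by (intro hankel_cong eq_matI) (auto simp: dim)
  also have "\<dots> = complex_of_real b \<cdot>\<^sub>m hankel q i (\<lambda>m. s (m+1)) - hankel q i (\<lambda>m. s (m+2))"
    by (rule hankel_smult_diff) (use assms in auto)
  finally show ?thesis .
qed

lemma u2_zero_eq_pencil:
  assumes "\<And>m. m \<le> i+1 \<Longrightarrow> s m \<in> carrier_mat q q"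
  shows "u2 q 0 b s i = complex_of_real b \<cdot>\<^sub>m blockcol q i (\<lambda>k. - s k) - blockcol q i (\<lambda>k. - s (k+1))"
proof -
  have dim: "dim_row (s m) = q" "dim_col (s m) = q" if "m \<le> i+1" for m
    using assms[OF that] by auto
  have "u2 q 0 b s i = blockcol q i (\<lambda>k. complex_of_real b \<cdot>\<^sub>m (- s k) - (- s (k+1)))"
    unfolding u2_def u20_def shat_def by (intro blockcol_cong eq_matI) (auto simp: dim)
  also have "\<dots> = complex_of_real b \<cdot>\<^sub>m blockcol q i (\<lambda>k. - s k) - blockcol q i (\<lambda>k. - s (k+1))"
    by (rule blockcol_smult_diff) (use assms in auto)
  finally show ?thesis .
qed

lemma u2t_zero:
  assumes "\<And>m. m \<le> i \<Longrightarrow> s m \<in> carrier_mat q q"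
  shows "u2t q 0 s i = blockcol q i (\<lambda>k. - s k)"
proof -
  have dim: "dim_row (s m) = q" "dim_col (s m) = q" if "m \<le> i" for m
    using assms[OF that] by auto
  show ?thesis unfolding u2t_def by (intro blockcol_cong eq_matI) (auto simp: dim)
qed

lemma K2_zero:
  assumes "\<And>m. m \<le> 2*i+1 \<Longrightarrow> s m \<in> carrier_mat q q"
  shows "K2 q 0 s i = hankel q i (\<lambda>m. s (m+1))"
proof -
  have dim: "dim_row (s m) = q" "dim_col (s m) = q" if "m \<le> 2*i+1" for m
    using assms[OF that] by auto
  show ?thesis unfolding K2_def by (intro hankel_cong eq_matI) (auto simp: dim)
qed

lemma tendsto_scaled_mu_zero:
  assumes "\<And>m. m \<le> 2*i+1 \<Longrightarrow> s m \<in> carrier_mat q q" and "det (hankel q i s) \<noteq> 0"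
  shows "mat_tendsto at_top q q (\<lambda>b. complex_of_real b \<cdot>\<^sub>m mu q 0 b s i) (Mcum q 0 s i)"
proof -
  have "mat_tendsto at_top q q
    (\<lambda>b. complex_of_real b \<cdot>\<^sub>m (cadj (vvec q i)
       * minv (complex_of_real b \<cdot>\<^sub>m hankel q i s - hankel q i (\<lambda>m. s (m+1))) * vvec q i))
    (cadj (vvec q i) * minv (hankel q i s) * vvec q i)"
    by (rule mat_tendsto_smult_sandwich_minv_pencil[OF hankel_carrier hankel_carrier vvec_carrier assms(2)])
  then show ?thesis by (simp add: mu_zero Mcum_zero K1_eq_pencil[OF assms(1)] H1_def)
qed

lemma tendsto_scaled_lam_zero:
  assumes "\<And>m. m \<le> 2*i+2 \<Longrightarrow> s m \<in> carrier_mat q q" and "det (hankel q i (\<lambda>m. s (m+1))) \<noteq> 0"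
  shows "mat_tendsto at_top q q (\<lambda>b. complex_of_real (inverse b) \<cdot>\<^sub>m lam q 0 b s i) (Lcum q 0 s i)"
proof -
  let ?U = "blockcol q i (\<lambda>k. - s k)" and ?X = "blockcol q i (\<lambda>k. - s (k+1))"
  have "mat_tendsto at_top q q
    (\<lambda>b. complex_of_real (inverse b) \<cdot>\<^sub>m (cadj (complex_of_real b \<cdot>\<^sub>m ?U - ?X)
       * minv (complex_of_real b \<cdot>\<^sub>m hankel q i (\<lambda>m. s (m+1)) - hankel q i (\<lambda>m. s (m+2)))
       * (complex_of_real b \<cdot>\<^sub>m ?U - ?X)))
    (cadj ?U * minv (hankel q i (\<lambda>m. s (m+1))) * ?U)"
    by (rule mat_tendsto_sandwich_minv_pencil[OF hankel_carrier hankel_carrier blockcol_carrier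
          blockcol_carrier assms(2)])
  moreover have "u2 q 0 b s i = complex_of_real b \<cdot>\<^sub>m ?U - ?X" for b
    by (rule u2_zero_eq_pencil) (use assms(1) in simp)
  moreover have "u2t q 0 s i = ?U" "K2 q 0 s i = hankel q i (\<lambda>m. s (m+1))"
    by (rule u2t_zero, use assms(1) in simp) (rule K2_zero, use assms(1) in simp)
  ultimately show ?thesis
    by (simp add: lam_zero[OF assms(1)] Lcum_zero H2_zero_eq_pencil[OF assms(1)])
qed

lemma mat_tendsto_first_difference:
  fixes j :: nat
  assumes "\<And>x i. i \<le> j \<Longrightarrow> f x i \<in> carrier_mat n n" "\<And>i. i \<le> j \<Longrightarrow> g i \<in> carrier_mat n n"
    and "\<And>i. i \<le> j \<Longrightarrow> mat_tendsto F n n (\<lambda>x. c x \<cdot>\<^sub>m f x i) (g i)"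
  shows "mat_tendsto F n n (\<lambda>x. c x \<cdot>\<^sub>m (if j = 0 then f x 0 else f x j - f x (j-1)))
           (if j = 0 then g 0 else g j - g (j-1))"
proof (cases "j = 0")
  case False
  have "c x \<cdot>\<^sub>m (f x j - f x (j-1)) = c x \<cdot>\<^sub>m f x j - c x \<cdot>\<^sub>m f x (j-1)" for x
  proof -
    have "f x j \<in> carrier_mat n n" by (rule assms(1)) simp
    moreover have "f x (j-1) \<in> carrier_mat n n" by (rule assms(1)) simp
    ultimately show ?thesis by (auto intro!: eq_matI simp: algebra_simps)
  qed
  moreover have "mat_tendsto F n n (\<lambda>x. c x \<cdot>\<^sub>m f x j - c x \<cdot>\<^sub>m f x (j-1)) (g j - g (j-1))"
    using assms by (intro mat_tendsto_diff) auto
  ultimately show ?thesis using False by simp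
qed (use assms(3) in simp)

lemma tendsto_scaled_m_par_zero:
  assumes s: "\<And>m. m \<le> 2*j+1 \<Longrightarrow> s m \<in> carrier_mat q q"
    and pd: "pos_def_mat ((j+1)*q) (hankel q j s)"
  shows "mat_tendsto at_top q q (\<lambda>b. complex_of_real b \<cdot>\<^sub>m m_par q 0 b s j) (M_par q 0 s j)"
proof -
  have s0: "s 0 \<in> carrier_mat q q" by (rule s) simp
  have "mat_tendsto at_top q q (\<lambda>b. complex_of_real b \<cdot>\<^sub>m mu q 0 b s i) (Mcum q 0 s i)" if "i \<le> j" for i
    using that s pos_def_mat_det_nonzero[OF pos_def_mat_hankel_truncate[OF pd that]]
    by (intro tendsto_scaled_mu_zero) auto
  then show ?thesis
    unfolding m_par_def M_par_def Mcum_zero_base[of s q, OF s0, symmetric]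
    by (intro mat_tendsto_first_difference)
      (simp_all add: mu_zero Mcum_zero K1_def H1_def sandwich_carrier[OF vvec_carrier hankel_carrier])
qed

lemma tendsto_scaled_l_par_zero:
  assumes s: "\<And>m. m \<le> 2*j+2 \<Longrightarrow> s m \<in> carrier_mat q q"
    and pd: "pos_def_mat ((j+1)*q) (hankel q j (\<lambda>n. s (n+1)))"
  shows "mat_tendsto at_top q q (\<lambda>b. complex_of_real (inverse b) \<cdot>\<^sub>m l_par q 0 b s j) (L_par q 0 s j)"
proof -
  have s0: "s 0 \<in> carrier_mat q q" by (rule s) simp
  have "mat_tendsto at_top q q (\<lambda>b. complex_of_real (inverse b) \<cdot>\<^sub>m lam q 0 b s i) (Lcum q 0 s i)"
    if "i \<le> j" for i
    using that s pos_def_mat_det_nonzero[OF pos_def_mat_hankel_truncate[OF pd that]]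
    by (intro tendsto_scaled_lam_zero) auto
  then show ?thesis
    unfolding l_par_def L_par_def Lcum_zero[symmetric]
    by (intro mat_tendsto_first_difference)
      (simp_all add: lam_zero[of s q, OF s0] Lcum_zero u2_def u2t_def H2_def K2_def
        sandwich_carrier[OF blockcol_carrier hankel_carrier])
qed

lemma eventually_pos_def_K1_H2_zero:
  assumes herm: "\<And>m. m \<le> 2*j+2 \<Longrightarrow> hermitian_mat q (s m)"
    and pd1: "pos_def_mat ((j+1)*q) (hankel q j s)"
    and pd2: "pos_def_mat ((j+1)*q) (hankel q j (\<lambda>n. s (n+1)))"
  shows "\<forall>\<^sub>F b in at_top. 0 < b \<and> pos_def_mat ((j+1)*q) (K1 q b s j)
                         \<and> pos_def_mat ((j+1)*q) (H2 q 0 b s j)"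
proof -
  have s: "s m \<in> carrier_mat q q" if "m \<le> 2*j+2" for m
    using herm[OF that] unfolding hermitian_mat_def by simp
  have "hermitian_mat ((j+1)*q) (hankel q j (\<lambda>n. s (n+1)))"
    using pd2 unfolding pos_def_mat_def by simp
  then have "\<forall>\<^sub>F b in at_top.
      pos_def_mat ((j+1)*q) (complex_of_real b \<cdot>\<^sub>m hankel q j s - hankel q j (\<lambda>n. s (n+1)))"
    by (rule eventually_pos_def_scaled_diff[OF pd1])
  moreover have "\<forall>\<^sub>F b in at_top. pos_def_mat ((j+1)*q)
      (complex_of_real b \<cdot>\<^sub>m hankel q j (\<lambda>n. s (n+1)) - hankel q j (\<lambda>n. s (n+2)))"
    using herm by (intro eventually_pos_def_scaled_diff[OF pd2] hermitian_mat_hankel) simp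
  ultimately show ?thesis
    using eventually_gt_at_top[of 0] by eventually_elim (simp add: K1_eq_pencil H2_zero_eq_pencil s)
qed

theorem mainTheorem12:
  fixes q j :: nat and s :: "nat \<Rightarrow> complex mat"
  assumes "0 < q"
    and herm: "\<And>n. n \<le> 2*j+2 \<Longrightarrow> hermitian_mat q (s n)"
    and pd1: "pos_def_mat ((j+1)*q) (hankel q j s)"
    and pd2: "pos_def_mat ((j+1)*q) (hankel q j (\<lambda>n. s (n+1)))"
  shows "eventually (\<lambda>b. 0 < b \<and> pos_def_mat ((j+1)*q) (K1 q b s j)
                         \<and> pos_def_mat ((j+1)*q) (H2 q 0 b s j)) at_top
       \<and> mat_tendsto_at_top q (\<lambda>b. complex_of_real b \<cdot>\<^sub>m m_par q 0 b s j) (M_par q 0 s j)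
       \<and> mat_tendsto_at_top q (\<lambda>b. complex_of_real (inverse b) \<cdot>\<^sub>m l_par q 0 b s j) (L_par q 0 s j)"
proof -
  have s: "s m \<in> carrier_mat q q" if "m \<le> 2*j+2" for m
    using herm[OF that] unfolding hermitian_mat_def by simp
  have "mat_tendsto at_top q q (\<lambda>b. complex_of_real b \<cdot>\<^sub>m m_par q 0 b s j) (M_par q 0 s j)"
    using s pd1 by (intro tendsto_scaled_m_par_zero) auto
  moreover have "mat_tendsto at_top q q
      (\<lambda>b. complex_of_real (inverse b) \<cdot>\<^sub>m l_par q 0 b s j) (L_par q 0 s j)"
    using s pd2 by (intro tendsto_scaled_l_par_zero) auto
  ultimately show ?thesis
    using eventually_pos_def_K1_H2_zero[OF herm pd1 pd2]
    unfolding mat_tendsto_at_top_def mat_tendsto_def by blast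
qed

end
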